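(* Let $S$ be a ground set, let $f$ be a function from subsets of $S$ to subsets of $S$, let $t\ge 1$ be an integer and $u=\lfloor(\frac{t}{2}+1)^2\rfloor$. A set $\mathcal{C}\subseteq S$ is a $t$-parent-identifying scheme under the $f$-channel if and only if there is no minimal forbidden configuration in $\mathcal{C}$ of size at most $u$.
   Context: Here $S$ is $Q^n$ or $2^Q$ for a finite set $Q$. $\mathcal{C}\subseteq S$ is a $t$-parent-identifying scheme under the $f$-channel if for every $\mathcal{C}'\subseteq\mathcal{C}$ with $|\mathcal{C}'|\le t$ and every $d\in f(\mathcal{C}')$, we have $\bigcap_{\mathcal{P}\subseteq\mathcal{C}:\,|\mathcal{P}|\le t,\ d\in f(\mathcal{P})}\mathcal{P}\neq\emptyset$. A configuration in $\mathcal{C}$ is a collection $\mathcal{F}=\{\mathcal{F}_1,\dots,\mathcal{F}_m\}$ of subsets $\mathcal{F}_i\subseteq\mathcal{C}$ with $|\mathcal{F}_i|\le t$ such that $\bigcap_{1\le i\le m}\mathcal{F}_i=\emptyset$; it is minimal if $\bigcap_{j\neq i}\mathcal{F}_j\neq\emptyset$ for every $1\le i\le m$. Its size is $|U(\mathcal{F})|$ where $U(\mathcal{F})=\bigcup_{i}\mathcal{F}_i$. A (minimal) forbidden configuration is a (minimal) configuration with $f(\mathcal{F}_1)\cap\cdots\cap f(\mathcal{F}_m)\neq\emptyset$. *)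

theory Defs
  imports Complex_Main
begin

definition ipp_scheme :: "('a set \<Rightarrow> 'a set) \<Rightarrow> nat \<Rightarrow> 'a set \<Rightarrow> bool" where
  "ipp_scheme f t C \<longleftrightarrow>
     (\<forall>C'. C' \<subseteq> C \<and> finite C' \<and> card C' \<le> t \<longrightarrow>
        (\<forall>d \<in> f C'. \<Inter>{P. P \<subseteq> C \<and> finite P \<and> card P \<le> t \<and> d \<in> f P} \<noteq> {}))"

definition configuration :: "nat \<Rightarrow> 'a set \<Rightarrow> 'a set set \<Rightarrow> bool" where
  "configuration t C F \<longleftrightarrow> finite F \<and> F \<noteq> {} \<and>
     (\<forall>X \<in> F. X \<subseteq> C \<and> finite X \<and> card X \<le> t) \<and> \<Inter>F = {}"

definition minimal_configuration :: "nat \<Rightarrow> 'a set \<Rightarrow> 'a set set \<Rightarrow> bool" where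
  "minimal_configuration t C F \<longleftrightarrow> configuration t C F \<and> (\<forall>X \<in> F. \<Inter>(F - {X}) \<noteq> {})"

definition minimal_forbidden_configuration ::
  "('a set \<Rightarrow> 'a set) \<Rightarrow> nat \<Rightarrow> 'a set \<Rightarrow> 'a set set \<Rightarrow> bool" where
  "minimal_forbidden_configuration f t C F \<longleftrightarrow>
     minimal_configuration t C F \<and> \<Inter>(f ` F) \<noteq> {}"

definition config_size :: "'a set set \<Rightarrow> nat" where
  "config_size F = card (\<Union>F)"

end

theory Submission
  imports Defs
begin

text \<open>Minimality of a configuration F gives every member X a private point a X, lying in all
  other members but not in X. With A the set of these m = card F points, each member meets A in
  m - 1 points and so has at most t + 1 - m points outside A. Hence the size of F is at most
  m + m (t + 1 - m) = m (t + 2 - m), which is at most (t/2 + 1)^2. Conversely, the sets P of size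
  at most t with d \<in> f P that witness a failure of the scheme property form a forbidden
  configuration, and any configuration contains a minimal one, with the same output d.\<close>

lemma mult_diff_le_quarter_square:
  fixes m t :: nat
  shows "m * (t + 2 - m) \<le> nat \<lfloor>(real t / 2 + 1) ^ 2\<rfloor>"
proof (cases "m \<le> t + 2")
  case True
  then have "real (m * (t + 2 - m)) = real m * (real t + 2 - real m)"
    by (simp add: of_nat_diff)
  also have "\<dots> \<le> (real t / 2 + 1) ^ 2"
    using zero_le_power2[of "real t + 2 - 2 * real m"]
    by (simp add: power2_eq_square algebra_simps)
  finally show ?thesis
    by (simp add: le_nat_floor)
qed simp

lemma minimal_configuration_obtains_private_points:
  assumes "minimal_configuration t C F"
  obtains a where "inj_on a F" and "\<And>X. X \<in> F \<Longrightarrow> a X \<notin> X"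
    and "\<And>X Y. X \<in> F \<Longrightarrow> Y \<in> F \<Longrightarrow> Y \<noteq> X \<Longrightarrow> a X \<in> Y"
proof -
  have empty: "\<Inter>F = {}" and nonempty: "\<And>X. X \<in> F \<Longrightarrow> \<Inter>(F - {X}) \<noteq> {}"
    using assms unfolding minimal_configuration_def configuration_def by auto
  define a where "a X = (SOME x. x \<in> \<Inter>(F - {X}))" for X
  have a_in: "a X \<in> Y" if "X \<in> F" "Y \<in> F" "Y \<noteq> X" for X Y
  proof -
    have "a X \<in> \<Inter>(F - {X})"
      unfolding a_def using nonempty[OF that(1)] by (metis ex_in_conv someI_ex)
    with that(2,3) show ?thesis by blast
  qed
  have a_notin: "a X \<notin> X" if "X \<in> F" for X
  proof
    assume "a X \<in> X"
    with a_in[OF that] have "a X \<in> \<Inter>F" by blast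
    with empty show False by simp
  qed
  have "inj_on a F"
  proof (rule inj_onI)
    fix X Y assume "X \<in> F" "Y \<in> F" "a X = a Y"
    then show "X = Y" using a_in[of X Y] a_notin[of Y] by auto
  qed
  from this a_notin a_in show thesis
    by (rule that)
qed

lemma minimal_configuration_card_Union_le:
  assumes "minimal_configuration t C F"
  shows "card (\<Union>F) \<le> card F * (t + 2 - card F)"
proof -
  have fin: "finite F" and nonempty: "F \<noteq> {}"
    and members: "\<And>X. X \<in> F \<Longrightarrow> finite X \<and> card X \<le> t"
    using assms unfolding minimal_configuration_def configuration_def by auto
  obtain a where inj: "inj_on a F" and a_notin: "\<And>X. X \<in> F \<Longrightarrow> a X \<notin> X"
    and a_in: "\<And>X Y. X \<in> F \<Longrightarrow> Y \<in> F \<Longrightarrow> Y \<noteq> X \<Longrightarrow> a X \<in> Y"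
    using minimal_configuration_obtains_private_points[OF assms] by blast
  define A where "A = a ` F"
  define m where "m = card F"
  have card_A: "card A = m" and fin_A: "finite A"
    unfolding A_def m_def using card_image[OF inj] fin by simp_all
  have outside: "card (X - A) \<le> t + 1 - m" and m_le: "m \<le> t + 1" if "X \<in> F" for X
  proof -
    have "X \<inter> A = A - {a X}"
      using a_in a_notin that unfolding A_def by blast
    then have "card (X \<inter> A) = m - 1"
      using card_A fin_A that by (simp add: A_def)
    moreover have "card X = card (X \<inter> A) + card (X - A)"
      using members[OF that] by (simp add: card_Int_Diff)
    moreover have "m \<ge> 1"
      using fin that by (auto simp: m_def Suc_le_eq card_gt_0_iff)
    ultimately show "card (X - A) \<le> t + 1 - m" "m \<le> t + 1"
      using members[OF that] by auto
  qed
  have "\<Union>F \<subseteq> A \<union> (\<Union>X\<in>F. X - A)"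
    by auto
  then have "card (\<Union>F) \<le> card (A \<union> (\<Union>X\<in>F. X - A))"
    by (intro card_mono) (use fin fin_A members in auto)
  also have "\<dots> \<le> card A + card (\<Union>X\<in>F. X - A)"
    by (rule card_Un_le)
  also have "card (\<Union>X\<in>F. X - A) \<le> (\<Sum>X\<in>F. card (X - A))"
    by (rule card_UN_le[OF fin])
  also have "\<dots> \<le> (\<Sum>X\<in>F. t + 1 - m)"
    by (rule sum_mono) (rule outside)
  finally have "card (\<Union>F) \<le> m + m * (t + 1 - m)"
    using card_A by (simp add: m_def)
  also have "\<dots> = m * (t + 2 - m)"
  proof -
    obtain X where "X \<in> F"
      using nonempty by blast
    then have "t + 2 - m = Suc (t + 1 - m)"
      using m_le by (simp add: Suc_diff_le)
    then show ?thesis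
      by simp
  qed
  finally show ?thesis
    unfolding m_def .
qed

lemma minimal_configuration_size_le:
  assumes "minimal_configuration t C F"
  shows "config_size F \<le> nat \<lfloor>(real t / 2 + 1) ^ 2\<rfloor>"
  using minimal_configuration_card_Union_le[OF assms] mult_diff_le_quarter_square[of "card F" t]
  unfolding config_size_def by linarith

lemma finite_obtains_minimal_empty_Inter:
  assumes "finite G" and "\<Inter>G = {}"
  obtains F where "F \<subseteq> G" and "\<Inter>F = {}" and "\<And>X. X \<in> F \<Longrightarrow> \<Inter>(F - {X}) \<noteq> {}"
proof -
  obtain F where F: "F \<subseteq> G \<and> \<Inter>F = {}"
    and least: "\<And>H. H \<subseteq> G \<and> \<Inter>H = {} \<Longrightarrow> card F \<le> card H"
    using ex_has_least_nat[of "\<lambda>H. H \<subseteq> G \<and> \<Inter>H = {}" G card] assms(2) by blast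
  have "\<Inter>(F - {X}) \<noteq> {}" if "X \<in> F" for X
  proof
    assume "\<Inter>(F - {X}) = {}"
    then have "card F \<le> card (F - {X})"
      using F by (intro least) auto
    moreover have "card (F - {X}) < card F"
      using F assms(1) that by (meson card_Diff1_less finite_subset)
    ultimately show False
      by simp
  qed
  with F show thesis
    using that by blast
qed

lemma forbidden_configuration_not_ipp_scheme:
  assumes "configuration t C F" and "\<Inter>(f ` F) \<noteq> {}"
  shows "\<not> ipp_scheme f t C"
proof
  assume ipp: "ipp_scheme f t C"
  have F: "F \<noteq> {}" "\<Inter>F = {}" "\<And>X. X \<in> F \<Longrightarrow> X \<subseteq> C \<and> finite X \<and> card X \<le> t"
    using assms(1) unfolding configuration_def by auto
  obtain d where d: "\<And>X. X \<in> F \<Longrightarrow> d \<in> f X"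
    using assms(2) by blast
  obtain X where X: "X \<in> F"
    using F(1) by blast
  have "\<Inter>{P. P \<subseteq> C \<and> finite P \<and> card P \<le> t \<and> d \<in> f P} \<noteq> {}"
    using ipp F(3)[OF X] d[OF X] unfolding ipp_scheme_def by simp
  moreover have "\<Inter>{P. P \<subseteq> C \<and> finite P \<and> card P \<le> t \<and> d \<in> f P} \<subseteq> \<Inter>F"
    using F(3) d by (intro Inter_anti_mono) auto
  ultimately show False
    using F(2) by simp
qed

lemma not_ipp_scheme_obtains_minimal_forbidden_configuration:
  assumes "finite C" and "\<not> ipp_scheme f t C"
  obtains F where "minimal_forbidden_configuration f t C F"
proof -
  define G where "G d = {P. P \<subseteq> C \<and> finite P \<and> card P \<le> t \<and> d \<in> f P}" for d
  obtain d where empty: "\<Inter>(G d) = {}"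
    using assms(2) unfolding ipp_scheme_def G_def by auto
  have "finite (G d)"
    using assms(1) unfolding G_def by (auto intro: finite_subset[of _ "Pow C"])
  obtain F where F: "F \<subseteq> G d" "\<Inter>F = {}" "\<And>X. X \<in> F \<Longrightarrow> \<Inter>(F - {X}) \<noteq> {}"
    using finite_obtains_minimal_empty_Inter[OF \<open>finite (G d)\<close> empty] by blast
  have "finite F"
    using F(1) \<open>finite (G d)\<close> by (rule finite_subset)
  moreover have "F \<noteq> {}"
    using F(2) by auto
  moreover have "d \<in> \<Inter>(f ` F)"
    using F(1) unfolding G_def by blast
  ultimately have "minimal_forbidden_configuration f t C F"
    using F(1-3) unfolding minimal_forbidden_configuration_def minimal_configuration_def
      configuration_def G_def by blast
  then show thesis
    by (rule that)
qed

theorem proposition1: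
  fixes S :: "'a set" and f :: "'a set \<Rightarrow> 'a set" and t :: nat and C :: "'a set"
  assumes "finite S"
    and "\<forall>X. X \<subseteq> S \<longrightarrow> f X \<subseteq> S"
    and "t \<ge> 1"
    and "C \<subseteq> S"
  shows "ipp_scheme f t C \<longleftrightarrow>
    \<not> (\<exists>F. minimal_forbidden_configuration f t C F \<and>
           config_size F \<le> nat \<lfloor>(real t / 2 + 1) ^ 2\<rfloor>)"
proof
  assume "ipp_scheme f t C"
  then show "\<not> (\<exists>F. minimal_forbidden_configuration f t C F \<and>
           config_size F \<le> nat \<lfloor>(real t / 2 + 1) ^ 2\<rfloor>)"
    by (auto simp: minimal_forbidden_configuration_def minimal_configuration_def
        dest: forbidden_configuration_not_ipp_scheme)
next
  assume no_small: "\<not> (\<exists>F. minimal_forbidden_configuration f t C F \<and>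
           config_size F \<le> nat \<lfloor>(real t / 2 + 1) ^ 2\<rfloor>)"
  show "ipp_scheme f t C"
  proof (rule ccontr)
    assume "\<not> ipp_scheme f t C"
    moreover have "finite C"
      using assms(1,4) by (rule finite_subset[rotated])
    ultimately obtain F where forbidden: "minimal_forbidden_configuration f t C F"
      using not_ipp_scheme_obtains_minimal_forbidden_configuration by blast
    then have "config_size F \<le> nat \<lfloor>(real t / 2 + 1) ^ 2\<rfloor>"
      unfolding minimal_forbidden_configuration_def by (blast intro: minimal_configuration_size_le)
    with forbidden show False
      using no_small by blast
  qed
qed

end
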